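(* Let $Z\subset\mathbb{R}^3$ be a $3$-dimensional zonotope with $n$ generators. Then $Z+t_Z$ is a $(2n+3)$-equiprojective polytope.
   Context: Up to translation, a zonotope is $\sum_{g\in\mathcal{G}}\mathrm{conv}\{0,g\}$ for a finite non-empty set $\mathcal{G}$ of pairwise non-collinear non-zero vectors; $|\mathcal{G}|$ is the number of generators. A vector $u\in\mathbb{S}^2$ is an edge direction of a polytope $P\subset\mathbb{R}^3$ when its first non-zero coordinate is positive and some edge of $P$ has difference of vertices a multiple of $u$. For each $3$-dimensional zonotope $Z$, $t_Z$ is a fixed triangle in $\mathbb{R}^3$ such that no edge direction of $t_Z$ lies in a plane spanned by two edge directions of $Z$, and no edge direction of $Z$ lies in the plane spanned by the edge directions of $t_Z$ (in particular $Z$ and $t_Z$ share no edge direction). A $3$-dimensional polytope is $k$-equiprojective when its orthogonal projection onto any plane not orthogonal to one of its facets is a polygon with exactly $k$ vertices. *)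

theory Defs
  imports "HOL-Analysis.Analysis"
begin

type_synonym vec3 = "real ^ 3"

definition zonotope_gen :: "vec3 set \<Rightarrow> vec3 set" where
  "zonotope_gen G = {(\<Sum>g\<in>G. c g *\<^sub>R g) | c. \<forall>g\<in>G. 0 \<le> c g \<and> c g \<le> 1}"

definition generator_set :: "vec3 set \<Rightarrow> bool" where
  "generator_set G \<longleftrightarrow> finite G \<and> G \<noteq> {} \<and> 0 \<notin> G \<and>
     (\<forall>g\<in>G. \<forall>h\<in>G. g \<noteq> h \<longrightarrow> \<not> collinear {0, g, h})"

definition zonotope_with_gens :: "vec3 set \<Rightarrow> vec3 set \<Rightarrow> bool" where
  "zonotope_with_gens Z G \<longleftrightarrow> generator_set G \<and> (\<exists>a. Z = (\<lambda>x. a + x) ` zonotope_gen G)"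

definition first_nonzero_pos :: "vec3 \<Rightarrow> bool" where
  "first_nonzero_pos u \<longleftrightarrow> u$1 > 0 \<or> (u$1 = 0 \<and> u$2 > 0) \<or> (u$1 = 0 \<and> u$2 = 0 \<and> u$3 > 0)"

definition edge_direction :: "vec3 \<Rightarrow> vec3 set \<Rightarrow> bool" where
  "edge_direction u P \<longleftrightarrow> norm u = 1 \<and> first_nonzero_pos u \<and>
     (\<exists>e a b c. e edge_of P \<and> a extreme_point_of P \<and> b extreme_point_of P \<and>
        a \<in> e \<and> b \<in> e \<and> a \<noteq> b \<and> b - a = c *\<^sub>R u)"

definition edge_dirs :: "vec3 set \<Rightarrow> vec3 set" where
  "edge_dirs P = {u. edge_direction u P}"

definition triangle :: "vec3 set \<Rightarrow> bool" where
  "triangle t \<longleftrightarrow> (\<exists>a b c. \<not> collinear {a, b, c} \<and> t = convex hull {a, b, c})"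

definition generic_triangle_for :: "vec3 set \<Rightarrow> vec3 set \<Rightarrow> bool" where
  "generic_triangle_for Z t \<longleftrightarrow> triangle t \<and>
     (\<forall>w\<in>edge_dirs t. \<forall>u\<in>edge_dirs Z. \<forall>v\<in>edge_dirs Z. u \<noteq> v \<longrightarrow> w \<notin> span {u, v}) \<and>
     (\<forall>u\<in>edge_dirs Z. u \<notin> span (edge_dirs t))"

definition minkowski_sum :: "vec3 set \<Rightarrow> vec3 set \<Rightarrow> vec3 set" where
  "minkowski_sum A B = {x + y | x y. x \<in> A \<and> y \<in> B}"

definition proj_plane :: "vec3 \<Rightarrow> vec3 \<Rightarrow> vec3" where
  "proj_plane d x = x - ((x \<bullet> d) / (d \<bullet> d)) *\<^sub>R d"

text \<open>The plane with normal d is orthogonal to facet F iff d is parallel to F,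
  i.e. d lies in the linear space of directions of F.\<close>
definition plane_orth_facet :: "vec3 \<Rightarrow> vec3 set \<Rightarrow> bool" where
  "plane_orth_facet d F \<longleftrightarrow> d \<in> span {x - y | x y. x \<in> F \<and> y \<in> F}"

definition equiprojective :: "nat \<Rightarrow> vec3 set \<Rightarrow> bool" where
  "equiprojective k P \<longleftrightarrow> polytope P \<and> aff_dim P = 3 \<and>
     (\<forall>d. d \<noteq> 0 \<and> (\<forall>F. F facet_of P \<longrightarrow> \<not> plane_orth_facet d F) \<longrightarrow>
        (let Q = proj_plane d ` P in
           polytope Q \<and> aff_dim Q = 2 \<and> card {v. v extreme_point_of Q} = k))"

end

theory Submission
  imports Defs "HOL-Analysis.Cross3"
begin

text \<open>
  Z + t is the triangle t swept along the generators of Z, i.e. \<open>t + \<Sum>g. [0, g]\<close>, and the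
  projection along d, being linear, turns it into the projected triangle swept along the projected
  generators. Sweeping a polygon along a segment [0, v] of its plane keeps the vertices maximizing
  some direction \<open>\<psi>\<close> with \<open>\<psi> \<bullet> v < 0\<close>, translates by v those maximizing some \<open>\<psi>\<close> with
  \<open>\<psi> \<bullet> v > 0\<close>, and exactly the two maximizers of the normals of v belong to both families: each
  generator adds two vertices, giving 3 + 2n. This needs unique maximizers of the normals of each
  projected generator at every stage, which holds when no two projected edge vectors (generators
  and triangle edges) are parallel. Any two edge vectors of Z + t span the direction space of the
  facet cut out by their common normal, so a direction d parallel to no facet avoids their span,
  and their projections stay non-parallel; generators and triangle edges are not parallel in the
  first place by the genericity of t.
\<close>

unbundle cross3_syntax

definition strict_maximizer :: "'a::real_inner set \<Rightarrow> 'a \<Rightarrow> 'a \<Rightarrow> bool" where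
  "strict_maximizer K \<psi> k \<longleftrightarrow> k \<in> K \<and> (\<forall>y\<in>K. y \<noteq> k \<longrightarrow> \<psi> \<bullet> y < \<psi> \<bullet> k)"

lemma strict_maximizer_le:
  "strict_maximizer K \<psi> k \<Longrightarrow> y \<in> K \<Longrightarrow> \<psi> \<bullet> y \<le> \<psi> \<bullet> k"
  unfolding strict_maximizer_def by (cases "y = k") (auto intro: less_imp_le)

lemma strict_maximizer_unique:
  "strict_maximizer K \<psi> k \<Longrightarrow> strict_maximizer K \<psi> k' \<Longrightarrow> k = k'"
  unfolding strict_maximizer_def by force

lemma strict_maximizer_scaleR:
  "strict_maximizer K \<psi> k \<Longrightarrow> c > 0 \<Longrightarrow> strict_maximizer K (c *\<^sub>R \<psi>) k"
  unfolding strict_maximizer_def by auto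

lemma strict_maximizer_uminus_imp_singleton:
  "strict_maximizer K \<psi> k \<Longrightarrow> strict_maximizer K (- \<psi>) k \<Longrightarrow> K = {k}"
  unfolding strict_maximizer_def by force

lemma strict_maximizer_imp_extreme_point:
  assumes "strict_maximizer K \<psi> k"
  shows "k extreme_point_of K"
  unfolding extreme_point_of_def
proof (intro conjI ballI notI)
  show "k \<in> K" using assms strict_maximizer_def by blast
  fix a b assume ab: "a \<in> K" "b \<in> K" and k: "k \<in> open_segment a b"
  then obtain u where u: "0 < u" "u < 1" "k = (1 - u) *\<^sub>R a + u *\<^sub>R b"
    by (auto simp: in_segment)
  have "k \<noteq> a" "k \<noteq> b" using k by (auto simp: open_segment_def)
  then have "\<psi> \<bullet> a < \<psi> \<bullet> k" "\<psi> \<bullet> b < \<psi> \<bullet> k"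
    using assms ab unfolding strict_maximizer_def by auto
  then have "(1 - u) * (\<psi> \<bullet> a) + u * (\<psi> \<bullet> b) < (1 - u) * (\<psi> \<bullet> k) + u * (\<psi> \<bullet> k)"
    using u by (intro add_strict_mono mult_strict_left_mono) auto
  then show False using u(3) by (simp add: inner_add_right algebra_simps)
qed

lemma extreme_point_imp_strict_maximizer:
  fixes K :: "'a::euclidean_space set"
  assumes "polytope K" "k extreme_point_of K"
  obtains \<psi> where "strict_maximizer K \<psi> k"
proof -
  have "{k} exposed_face_of K"
    using assms exposed_face_of_polyhedron polytope_imp_polyhedron face_of_singleton by blast
  then obtain a b where ab: "K \<subseteq> {x. a \<bullet> x \<le> b}" "{k} = K \<inter> {x. a \<bullet> x = b}"
    unfolding exposed_face_of_def by blast
  then have "strict_maximizer K a k"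
    unfolding strict_maximizer_def by (force simp: set_eq_iff)
  then show thesis by (rule that)
qed

lemma strict_maximizer_convex_hull:
  assumes "finite E" "k \<in> E" "\<And>e. e \<in> E \<Longrightarrow> e \<noteq> k \<Longrightarrow> \<psi> \<bullet> e < \<psi> \<bullet> k"
  shows "strict_maximizer (convex hull E) \<psi> k"
  unfolding strict_maximizer_def
proof (intro conjI ballI impI)
  show "k \<in> convex hull E" by (rule hull_inc[OF assms(2)])
  fix y assume y: "y \<in> convex hull E" "y \<noteq> k"
  then obtain u where u: "\<forall>x\<in>E. 0 \<le> u x" "sum u E = 1" "(\<Sum>x\<in>E. u x *\<^sub>R x) = y"
    unfolding convex_hull_finite[OF assms(1)] by blast
  have "\<exists>e\<in>E. e \<noteq> k \<and> u e > 0"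
  proof (rule ccontr)
    assume "\<not> ?thesis"
    then have "\<forall>e\<in>E. e \<noteq> k \<longrightarrow> u e = 0" using u(1) by force
    then have "sum u E = u k" "(\<Sum>x\<in>E. u x *\<^sub>R x) = u k *\<^sub>R k"
      using assms(1,2) by (simp_all add: sum.remove)
    then show False using u y by simp
  qed
  then obtain e where e: "e \<in> E" "e \<noteq> k" "u e > 0" by blast
  have le: "u x * (\<psi> \<bullet> x) \<le> u x * (\<psi> \<bullet> k)" if "x \<in> E" for x
    using assms(3)[OF that] u(1) that by (cases "x = k") (auto intro: mult_left_mono)
  have "\<psi> \<bullet> y = (\<Sum>x\<in>E. u x * (\<psi> \<bullet> x))" using u(3) by (auto simp: inner_sum_right)
  also have "\<dots> < (\<Sum>x\<in>E. u x * (\<psi> \<bullet> k))"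
    by (rule sum_strict_mono_ex1[OF assms(1)])
      (use le e assms(3)[OF e(1,2)] in \<open>auto intro!: bexI[of _ e]\<close>)
  also have "\<dots> = \<psi> \<bullet> k" using u(2) by (simp add: sum_distrib_right[symmetric])
  finally show "\<psi> \<bullet> y < \<psi> \<bullet> k" .
qed

lemma strict_maximizer_convex_hull_3:
  assumes "\<psi> \<bullet> A \<noteq> \<psi> \<bullet> B" "\<psi> \<bullet> A \<noteq> \<psi> \<bullet> C" "\<psi> \<bullet> B \<noteq> \<psi> \<bullet> C"
  shows "\<exists>k. strict_maximizer (convex hull {A, B, C}) \<psi> k"
proof -
  consider "\<psi> \<bullet> B < \<psi> \<bullet> A \<and> \<psi> \<bullet> C < \<psi> \<bullet> A" | "\<psi> \<bullet> A < \<psi> \<bullet> B \<and> \<psi> \<bullet> C < \<psi> \<bullet> B"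
    | "\<psi> \<bullet> A < \<psi> \<bullet> C \<and> \<psi> \<bullet> B < \<psi> \<bullet> C" using assms by linarith
  then show ?thesis
    by cases (metis empty_iff finite.emptyI finite.insertI insertCI insertE strict_maximizer_convex_hull)+
qed

lemma strict_maximizer_perturb:
  assumes "finite E" "strict_maximizer (convex hull E) \<psi> k"
  obtains \<epsilon> where "\<epsilon> > 0" "\<And>s. \<bar>s\<bar> \<le> \<epsilon> \<Longrightarrow> strict_maximizer (convex hull E) (\<psi> + s *\<^sub>R v) k"
proof -
  have lt: "\<psi> \<bullet> e < \<psi> \<bullet> k" if "e \<in> E" "e \<noteq> k" for e
    using assms(2) hull_inc[OF that(1)] that(2) unfolding strict_maximizer_def by blast
  have kE: "k \<in> E"
  proof (rule ccontr)
    assume "k \<notin> E"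
    then have "convex hull E \<subseteq> {x. \<psi> \<bullet> x < \<psi> \<bullet> k}"
      using lt by (intro hull_minimal convex_halfspace_lt) auto
    then show False using assms(2) unfolding strict_maximizer_def by auto
  qed
  define f where "f e = (\<psi> \<bullet> (k - e)) / (\<bar>v \<bullet> (k - e)\<bar> + 1)" for e
  \<comment> \<open>the 1 keeps the minimum defined when \<open>E = {k}\<close>\<close>
  define \<epsilon> where "\<epsilon> = Min (insert 1 (f ` (E - {k})))"
  have fpos: "f e > 0" if "e \<in> E - {k}" for e
    using lt[of e] that unfolding f_def by (auto simp: inner_diff_right)
  have "\<epsilon> > 0" unfolding \<epsilon>_def using assms(1) fpos by (subst Min_gr_iff) auto
  moreover have "strict_maximizer (convex hull E) (\<psi> + s *\<^sub>R v) k" if s: "\<bar>s\<bar> \<le> \<epsilon>" for s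
  proof (rule strict_maximizer_convex_hull[OF assms(1) kE])
    fix e assume e: "e \<in> E" "e \<noteq> k"
    let ?a = "\<psi> \<bullet> (k - e)" and ?b = "\<bar>v \<bullet> (k - e)\<bar>"
    have "?a > 0" using lt[OF e] by (simp add: inner_diff_right)
    have "\<epsilon> \<le> f e" unfolding \<epsilon>_def using assms(1) e by auto
    then have "\<bar>s * (v \<bullet> (k - e))\<bar> \<le> f e * ?b"
      using s by (simp add: abs_mult) (meson abs_ge_zero mult_right_mono order_trans)
    also have "f e * ?b = ?a * (?b / (?b + 1))" unfolding f_def by simp
    also have "\<dots> < ?a * 1" using \<open>?a > 0\<close> by (intro mult_strict_left_mono) auto
    finally have "\<bar>s * (v \<bullet> (k - e))\<bar> < ?a" by simp
    then show "(\<psi> + s *\<^sub>R v) \<bullet> e < (\<psi> + s *\<^sub>R v) \<bullet> k"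
      by (simp add: inner_diff_right inner_add_left algebra_simps abs_less_iff)
  qed
  ultimately show thesis by (rule that)
qed

lemma polytope_extreme_points:
  fixes K :: "'a::euclidean_space set"
  assumes "polytope K"
  shows "finite {x. x extreme_point_of K}" "K = convex hull {x. x extreme_point_of K}"
  by (rule finite_polyhedron_extreme_points[OF polytope_imp_polyhedron[OF assms]])
    (rule Krein_Milman_Minkowski[OF polytope_imp_compact[OF assms] polytope_imp_convex[OF assms]])

section \<open>Sweeping along segments\<close>

definition sweep :: "'a::real_vector set \<Rightarrow> 'a \<Rightarrow> 'a set" where
  "sweep K v = {y + c *\<^sub>R v | y c. y \<in> K \<and> 0 \<le> c \<and> c \<le> 1}"

lemma sweepI: "y \<in> K \<Longrightarrow> 0 \<le> c \<Longrightarrow> c \<le> 1 \<Longrightarrow> y + c *\<^sub>R v \<in> sweep K v"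
  unfolding sweep_def by blast

lemma sweep_eq_set_plus: "sweep K v = K + closed_segment 0 v"
  unfolding sweep_def set_plus_def closed_segment_def by auto

lemma polytope_sweep:
  assumes "polytope K"
  shows "polytope (sweep K v)"
proof -
  obtain V where V: "finite V" "K = convex hull V" using assms polytope_def by blast
  have "sweep K v = convex hull (V + {0, v})"
    by (simp add: sweep_eq_set_plus V segment_convex_hull convex_hull_set_plus)
  then show ?thesis using V(1) by (simp add: polytope_convex_hull finite_set_plus)
qed

lemma sweep_subset_hyperplane:
  "K \<subseteq> {x. x \<bullet> d = 0} \<Longrightarrow> v \<bullet> d = 0 \<Longrightarrow> sweep K v \<subseteq> {x. x \<bullet> d = 0}"
  unfolding sweep_def by (auto simp: inner_add_left)

lemma strict_maximizer_sweep_pos: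
  assumes "strict_maximizer K \<psi> k" "\<psi> \<bullet> v > 0"
  shows "strict_maximizer (sweep K v) \<psi> (k + v)"
  unfolding strict_maximizer_def
proof (intro conjI ballI impI)
  show "k + v \<in> sweep K v"
    using sweepI[of k K 1] assms(1) unfolding strict_maximizer_def by simp
  fix x assume x: "x \<in> sweep K v" "x \<noteq> k + v"
  then obtain y c where y: "x = y + c *\<^sub>R v" "y \<in> K" "0 \<le> c" "c \<le> 1"
    unfolding sweep_def by blast
  with x(2) have "y \<noteq> k \<or> c \<noteq> 1" by auto
  have "\<psi> \<bullet> y \<le> \<psi> \<bullet> k" "c * (\<psi> \<bullet> v) \<le> \<psi> \<bullet> v"
    using strict_maximizer_le[OF assms(1) y(2)] assms(2) y(4) by (auto simp: mult_left_le_one_le)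
  moreover have "\<psi> \<bullet> y < \<psi> \<bullet> k \<or> c * (\<psi> \<bullet> v) < \<psi> \<bullet> v"
    using y(2,4) \<open>y \<noteq> k \<or> c \<noteq> 1\<close> assms unfolding strict_maximizer_def by auto
  ultimately show "\<psi> \<bullet> x < \<psi> \<bullet> (k + v)" using y(1) by (auto simp: inner_add_right)
qed

lemma strict_maximizer_sweep_neg:
  assumes "strict_maximizer K \<psi> k" "\<psi> \<bullet> v < 0"
  shows "strict_maximizer (sweep K v) \<psi> k"
  unfolding strict_maximizer_def
proof (intro conjI ballI impI)
  show "k \<in> sweep K v"
    using sweepI[of k K 0] assms(1) unfolding strict_maximizer_def by simp
  fix x assume x: "x \<in> sweep K v" "x \<noteq> k"
  then obtain y c where y: "x = y + c *\<^sub>R v" "y \<in> K" "0 \<le> c" "c \<le> 1"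
    unfolding sweep_def by blast
  with x(2) have "y \<noteq> k \<or> c \<noteq> 0" by auto
  have "\<psi> \<bullet> y \<le> \<psi> \<bullet> k" "c * (\<psi> \<bullet> v) \<le> 0"
    using strict_maximizer_le[OF assms(1) y(2)] assms(2) y(3) by (auto simp: mult_nonneg_nonpos)
  moreover have "\<psi> \<bullet> y < \<psi> \<bullet> k \<or> c * (\<psi> \<bullet> v) < 0"
    using y(2,3) \<open>y \<noteq> k \<or> c \<noteq> 0\<close> assms unfolding strict_maximizer_def by (auto simp: mult_pos_neg)
  ultimately show "\<psi> \<bullet> x < \<psi> \<bullet> k" using y(1) by (auto simp: inner_add_right)
qed

lemma strict_maximizer_sweep:
  assumes "strict_maximizer K \<psi> k" "\<psi> \<bullet> v \<noteq> 0"
  shows "\<exists>k'. strict_maximizer (sweep K v) \<psi> k'"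
  using assms strict_maximizer_sweep_pos strict_maximizer_sweep_neg by (cases "\<psi> \<bullet> v > 0") force+

text \<open>There is no case \<open>\<psi> \<bullet> v = 0\<close>: a whole segment parallel to v would maximize \<open>\<psi>\<close>.\<close>

lemma strict_maximizer_of_sweep:
  assumes "strict_maximizer (sweep K v) \<psi> x" "v \<noteq> 0"
  obtains "\<psi> \<bullet> v > 0" "strict_maximizer K \<psi> (x - v)"
    | "\<psi> \<bullet> v < 0" "strict_maximizer K \<psi> x"
proof -
  obtain y c where x: "x = y + c *\<^sub>R v" "y \<in> K" "0 \<le> c" "c \<le> 1"
    using assms(1) unfolding strict_maximizer_def sweep_def by blast
  have lt: "\<psi> \<bullet> (y' + c' *\<^sub>R v) < \<psi> \<bullet> x"
    if "y' \<in> K" "0 \<le> c'" "c' \<le> 1" "y' + c' *\<^sub>R v \<noteq> x" for y' c'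
    using assms(1) sweepI[OF that(1-3)] that(4) unfolding strict_maximizer_def by blast
  have other_end: "\<psi> \<bullet> (y + c' *\<^sub>R v) < \<psi> \<bullet> x" if "c' \<in> {0, 1}" "c' \<noteq> c" for c'
    using lt[OF x(2), of c'] that x(1) assms(2) by auto
  have same_shift: "strict_maximizer K \<psi> y" if "c' \<in> {0, 1}" "c' = c" for c'
    unfolding strict_maximizer_def
  proof (intro conjI ballI impI)
    fix y' assume "y' \<in> K" "y' \<noteq> y"
    then have "\<psi> \<bullet> (y' + c *\<^sub>R v) < \<psi> \<bullet> x" using lt[of y' c] that x by auto
    then show "\<psi> \<bullet> y' < \<psi> \<bullet> y" using x(1) by (simp add: inner_add_right)
  qed (rule x(2))
  consider "\<psi> \<bullet> v > 0" | "\<psi> \<bullet> v < 0" | "\<psi> \<bullet> v = 0" by linarith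
  then show thesis
  proof cases
    case 1
    have "c = 1"
      using other_end[of 1] x 1 mult_left_le_one_le[of "\<psi> \<bullet> v" c]
      by (fastforce simp: inner_add_right)
    then show thesis using that(1)[OF 1] same_shift[of 1] x(1) by simp
  next
    case 2
    have "c = 0"
      using other_end[of 0] x 2 mult_nonneg_nonpos[of c "\<psi> \<bullet> v"]
      by (fastforce simp: inner_add_right)
    then show thesis using that(2)[OF 2] same_shift[of 0] x(1) by simp
  next
    case 3
    define c' where "c' = (if c = 0 then 1 else (0::real))"
    have "c' \<in> {0, 1}" "c' \<noteq> c" unfolding c'_def by auto
    from other_end[OF this] 3 x(1) show thesis by (simp add: inner_add_right)
  qed
qed

definition sweep_family :: "'a::real_vector set \<Rightarrow> ('b \<Rightarrow> 'a) \<Rightarrow> 'b set \<Rightarrow> 'a set" where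
  "sweep_family T u S = {\<tau> + (\<Sum>g\<in>S. c g *\<^sub>R u g) | \<tau> c. \<tau> \<in> T \<and> (\<forall>g\<in>S. 0 \<le> c g \<and> c g \<le> 1)}"

lemma sweep_familyI:
  "\<tau> \<in> T \<Longrightarrow> \<forall>g\<in>S. 0 \<le> c g \<and> c g \<le> 1 \<Longrightarrow> \<tau> + (\<Sum>g\<in>S. c g *\<^sub>R u g) \<in> sweep_family T u S"
  unfolding sweep_family_def by blast

lemma sweep_family_empty [simp]: "sweep_family T u {} = T"
  unfolding sweep_family_def by auto

lemma subset_sweep_family: "T \<subseteq> sweep_family T u S"
  using sweep_familyI[of _ T S "\<lambda>_. 0" u] by auto

lemma sweep_family_insert:
  assumes "finite S" "g \<notin> S"
  shows "sweep_family T u (insert g S) = sweep (sweep_family T u S) (u g)"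
proof
  show "sweep_family T u (insert g S) \<subseteq> sweep (sweep_family T u S) (u g)"
  proof
    fix x assume "x \<in> sweep_family T u (insert g S)"
    then obtain \<tau> c where x: "x = \<tau> + (\<Sum>h\<in>insert g S. c h *\<^sub>R u h)" "\<tau> \<in> T"
      "\<forall>h\<in>insert g S. 0 \<le> c h \<and> c h \<le> 1" unfolding sweep_family_def by blast
    have "x = (\<tau> + (\<Sum>h\<in>S. c h *\<^sub>R u h)) + c g *\<^sub>R u g"
      using x(1) assms by (simp add: algebra_simps)
    moreover have "\<tau> + (\<Sum>h\<in>S. c h *\<^sub>R u h) \<in> sweep_family T u S"
      using x(2,3) by (intro sweep_familyI) auto
    ultimately show "x \<in> sweep (sweep_family T u S) (u g)"
      using x(3) by (auto intro: sweepI)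
  qed
  show "sweep (sweep_family T u S) (u g) \<subseteq> sweep_family T u (insert g S)"
  proof
    fix x assume "x \<in> sweep (sweep_family T u S) (u g)"
    then obtain \<tau> c a where x: "x = \<tau> + (\<Sum>h\<in>S. c h *\<^sub>R u h) + a *\<^sub>R u g" "\<tau> \<in> T"
      "\<forall>h\<in>S. 0 \<le> c h \<and> c h \<le> 1" "0 \<le> a" "a \<le> 1"
      unfolding sweep_def sweep_family_def by blast
    have "(\<Sum>h\<in>S. (c(g := a)) h *\<^sub>R u h) = (\<Sum>h\<in>S. c h *\<^sub>R u h)"
      using assms(2) by (intro sum.cong) auto
    then have "x = \<tau> + (\<Sum>h\<in>insert g S. (c(g := a)) h *\<^sub>R u h)"
      using x(1) assms by (simp add: algebra_simps)
    then show "x \<in> sweep_family T u (insert g S)"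
      using sweep_familyI[OF x(2), of "insert g S" "c(g := a)"] x(3-5) by auto
  qed
qed

lemma polytope_sweep_family:
  assumes "finite S" "polytope T"
  shows "polytope (sweep_family T u S)"
  using assms(1) by induction (simp_all add: assms(2) sweep_family_insert polytope_sweep)

lemma sweep_family_subset_hyperplane:
  assumes "T \<subseteq> {x. x \<bullet> d = 0}" "\<forall>g\<in>S. u g \<bullet> d = 0"
  shows "sweep_family T u S \<subseteq> {x. x \<bullet> d = 0}"
  using assms unfolding sweep_family_def by (auto simp: inner_add_left inner_sum_left)

lemma sweep_family_linear_image:
  assumes "linear L"
  shows "L ` sweep_family T u S = sweep_family (L ` T) (\<lambda>g. L (u g)) S"
proof -
  have L: "L (\<tau> + (\<Sum>g\<in>S. c g *\<^sub>R u g)) = L \<tau> + (\<Sum>g\<in>S. c g *\<^sub>R L (u g))" for \<tau> c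
    using assms by (simp add: linear_add linear_sum linear_scale)
  show ?thesis
  proof (intro equalityI subsetI)
    fix x assume "x \<in> L ` sweep_family T u S"
    then obtain \<tau> c where x: "x = L (\<tau> + (\<Sum>g\<in>S. c g *\<^sub>R u g))" "\<tau> \<in> T"
      "\<forall>g\<in>S. 0 \<le> c g \<and> c g \<le> 1" unfolding sweep_family_def by blast
    then show "x \<in> sweep_family (L ` T) (\<lambda>g. L (u g)) S"
      using sweep_familyI[of "L \<tau>" "L ` T" S c "\<lambda>g. L (u g)"] by (simp add: L)
  next
    fix x assume "x \<in> sweep_family (L ` T) (\<lambda>g. L (u g)) S"
    then obtain \<tau> c where x: "x = L \<tau> + (\<Sum>g\<in>S. c g *\<^sub>R L (u g))" "\<tau> \<in> T"
      "\<forall>g\<in>S. 0 \<le> c g \<and> c g \<le> 1" unfolding sweep_family_def by blast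
    then have "x = L (\<tau> + (\<Sum>g\<in>S. c g *\<^sub>R u g))" by (simp add: L)
    then show "x \<in> L ` sweep_family T u S" using sweep_familyI[OF x(2,3)] by (rule image_eqI)
  qed
qed

lemma strict_maximizer_sweep_family:
  assumes "finite S" "\<forall>g\<in>S. \<psi> \<bullet> u g \<noteq> 0" "strict_maximizer T \<psi> k"
  shows "\<exists>k'. strict_maximizer (sweep_family T u S) \<psi> k'"
  using assms
  by (induction S) (auto simp: sweep_family_insert dest: strict_maximizer_sweep)

definition top_vertex :: "'a::real_inner \<Rightarrow> ('b \<Rightarrow> 'a) \<Rightarrow> 'b set \<Rightarrow> 'a \<Rightarrow> 'a" where
  "top_vertex m u S \<tau> = \<tau> + (\<Sum>g\<in>S. (if m \<bullet> u g > 0 then 1 else 0) *\<^sub>R u g)"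

lemma top_vertex_mem: "\<tau> \<in> T \<Longrightarrow> top_vertex m u S \<tau> \<in> sweep_family T u S"
  unfolding top_vertex_def by (rule sweep_familyI) auto

lemma top_vertex_translate: "top_vertex m u S \<tau> + (\<tau>' - \<tau>) = top_vertex m u S \<tau>'"
  unfolding top_vertex_def by simp

lemma top_vertex_add_orthogonal:
  assumes "finite S" "\<tau> \<in> T" "g \<in> S" "m \<bullet> u g = 0"
  shows "top_vertex m u S \<tau> + u g \<in> sweep_family T u S"
proof -
  define c where "c h = (if m \<bullet> u h > 0 then 1 else 0 :: real)" for h
  have "(\<Sum>h\<in>S. (c(g := 1)) h *\<^sub>R u h) = u g + (\<Sum>h\<in>S - {g}. c h *\<^sub>R u h)"
    using assms(1,3) by (simp add: sum.remove)
  also have "(\<Sum>h\<in>S - {g}. c h *\<^sub>R u h) = (\<Sum>h\<in>S. c h *\<^sub>R u h)"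
    using assms(1,3,4) by (simp add: sum.remove c_def)
  finally have "top_vertex m u S \<tau> + u g = \<tau> + (\<Sum>h\<in>S. (c(g := 1)) h *\<^sub>R u h)"
    unfolding top_vertex_def c_def by simp
  then show ?thesis using sweep_familyI[OF assms(2), of S "c(g := 1)"] by (simp add: c_def)
qed

lemma top_vertex_max:
  assumes "\<forall>\<tau>'\<in>T. m \<bullet> \<tau>' \<le> m \<bullet> \<tau>" "y \<in> sweep_family T u S"
  shows "m \<bullet> y \<le> m \<bullet> top_vertex m u S \<tau>"
proof -
  obtain \<tau>' c where y: "y = \<tau>' + (\<Sum>g\<in>S. c g *\<^sub>R u g)" "\<tau>' \<in> T" "\<forall>g\<in>S. 0 \<le> c g \<and> c g \<le> 1"
    using assms(2) unfolding sweep_family_def by blast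
  have "c g * (m \<bullet> u g) \<le> (if m \<bullet> u g > 0 then 1 else 0) * (m \<bullet> u g)" if "g \<in> S" for g
    using y(3) that by (auto simp: mult_left_le_one_le mult_nonneg_nonpos)
  then have "(\<Sum>g\<in>S. c g * (m \<bullet> u g)) \<le> (\<Sum>g\<in>S. (if m \<bullet> u g > 0 then 1 else 0) * (m \<bullet> u g))"
    by (rule sum_mono)
  with assms(1) y(2) show ?thesis
    unfolding y(1) top_vertex_def by (simp add: inner_add_right inner_sum_right add_mono)
qed

lemma linear_proj_plane: "linear (proj_plane d)"
  by (rule linearI) (simp_all add: proj_plane_def inner_add_left algebra_simps add_divide_distrib)

lemma proj_plane_orthogonal: "d \<noteq> 0 \<Longrightarrow> proj_plane d x \<bullet> d = 0"
  unfolding proj_plane_def by (simp add: inner_diff_left)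

lemma proj_plane_inner: "y \<bullet> d = 0 \<Longrightarrow> proj_plane d x \<bullet> y = x \<bullet> y"
  using inner_commute[of y d] unfolding proj_plane_def by (simp add: inner_diff_left)

lemma strict_maximizer_proj_plane:
  "K \<subseteq> {x. x \<bullet> d = 0} \<Longrightarrow> strict_maximizer K \<psi> k \<Longrightarrow> strict_maximizer K (proj_plane d \<psi>) k"
  unfolding strict_maximizer_def by (auto simp: proj_plane_inner subset_iff)

lemma cross_orthogonal_nonzero:
  fixes d v :: vec3
  assumes "d \<noteq> 0" "v \<noteq> 0" "v \<bullet> d = 0"
  shows "d \<times> v \<noteq> 0"
proof
  assume "d \<times> v = 0"
  then obtain c where "v = c *\<^sub>R d" using assms(1) by (auto simp: cross_eq_0 collinear_lemma)
  with assms show False by simp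
qed

lemma orthogonal_both_imp_multiple_cross:
  fixes \<psi> a b :: vec3
  assumes "\<psi> \<bullet> a = 0" "\<psi> \<bullet> b = 0" "a \<times> b \<noteq> 0"
  obtains c where "\<psi> = c *\<^sub>R (a \<times> b)"
proof -
  have "(a \<times> b) \<times> \<psi> = 0" using assms by (simp add: cross_skew[of "a \<times> b"] Lagrange inner_commute)
  then have "collinear {0, a \<times> b, \<psi>}" by (simp add: cross_eq_0)
  then show thesis using assms(3) that by (auto simp: collinear_lemma)
qed

lemma orthogonal_pair_collinear:
  fixes \<psi> d x y :: vec3
  assumes "\<psi> \<noteq> 0" "d \<noteq> 0" "\<psi> \<bullet> d = 0" "x \<bullet> d = 0" "y \<bullet> d = 0" "x \<bullet> \<psi> = 0" "y \<bullet> \<psi> = 0"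
  shows "collinear {0, x, y}"
proof -
  have "d \<times> \<psi> \<noteq> 0" using cross_orthogonal_nonzero assms(1-3) by blast
  then obtain a b where "x = a *\<^sub>R (d \<times> \<psi>)" "y = b *\<^sub>R (d \<times> \<psi>)"
    using orthogonal_both_imp_multiple_cross assms(4-7) by metis
  then show ?thesis
    by (cases "a = 0") (auto simp: collinear_lemma intro!: exI[of _ "b / a"])
qed

lemma collinear_0_iff_lincomb:
  fixes x y :: "'a::real_vector"
  shows "collinear {0, x, y} \<longleftrightarrow> (\<exists>a b. (a \<noteq> 0 \<or> b \<noteq> 0) \<and> a *\<^sub>R x + b *\<^sub>R y = 0)"
proof
  assume "collinear {0, x, y}"
  then consider "x = 0" | "y = 0" | c where "y = c *\<^sub>R x" by (auto simp: collinear_lemma)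
  then show "\<exists>a b. (a \<noteq> 0 \<or> b \<noteq> 0) \<and> a *\<^sub>R x + b *\<^sub>R y = 0"
  proof cases
    case 1
    then show ?thesis by (intro exI[of _ 1] exI[of _ 0]) simp
  next
    case 2
    then show ?thesis by (intro exI[of _ 0] exI[of _ 1]) simp
  next
    case (3 c)
    then show ?thesis by (intro exI[of _ c] exI[of _ "- 1"]) simp
  qed
next
  assume "\<exists>a b. (a \<noteq> 0 \<or> b \<noteq> 0) \<and> a *\<^sub>R x + b *\<^sub>R y = 0"
  then obtain a b where ab: "a \<noteq> 0 \<or> b \<noteq> 0" "a *\<^sub>R x + b *\<^sub>R y = 0" by blast
  show "collinear {0, x, y}"
  proof (cases "b = 0")
    case True
    then show ?thesis using ab by (simp add: collinear_lemma)
  next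
    case False
    have "y = (1 / b) *\<^sub>R (b *\<^sub>R y)" using False by simp
    also have "b *\<^sub>R y = - (a *\<^sub>R x)" using ab(2) by (simp add: eq_neg_iff_add_eq_0 add.commute)
    finally have "y = (- a / b) *\<^sub>R x" by simp
    then show ?thesis unfolding collinear_lemma by blast
  qed
qed

lemma proj_plane_eq_0:
  assumes "proj_plane d x = 0"
  shows "x \<in> span {d}"
proof -
  have "x = ((x \<bullet> d) / (d \<bullet> d)) *\<^sub>R d" using assms unfolding proj_plane_def by simp
  then show ?thesis by (metis span_base span_mul singletonI)
qed

text \<open>A dependence between the projections of u and v lifts to one between u, v and d.\<close>

lemma proj_plane_noncollinear:
  assumes "d \<notin> span {u, v}" "\<not> collinear {0, u, v}"
  shows "\<not> collinear {0, proj_plane d u, proj_plane d v}"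
proof
  assume "collinear {0, proj_plane d u, proj_plane d v}"
  then obtain a b where ab: "a \<noteq> 0 \<or> b \<noteq> 0" "a *\<^sub>R proj_plane d u + b *\<^sub>R proj_plane d v = 0"
    by (auto simp: collinear_0_iff_lincomb)
  then have "proj_plane d (a *\<^sub>R u + b *\<^sub>R v) = 0"
    using linear_proj_plane by (simp add: linear_add linear_scale)
  then obtain t where t: "a *\<^sub>R u + b *\<^sub>R v = t *\<^sub>R d"
    using proj_plane_eq_0 by (auto simp: span_singleton)
  show False
  proof (cases "t = 0")
    case True
    then show False using ab(1) t assms(2) by (auto simp: collinear_0_iff_lincomb)
  next
    case False
    then have "d = (1 / t) *\<^sub>R (a *\<^sub>R u + b *\<^sub>R v)" using t by simp
    moreover have "a *\<^sub>R u + b *\<^sub>R v \<in> span {u, v}" by (intro span_add span_mul span_base) auto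
    ultimately show False using assms(1) span_mul by metis
  qed
qed

section \<open>Vertices of a sweep in a plane\<close>

text \<open>\<open>kept\<close> are the vertices of K that stay vertices of the sweep along v, \<open>shifted\<close> those
  whose translates by v become vertices; the two families overlap in the unique maximizers
  \<open>k\<^sub>1\<close>, \<open>k\<^sub>2\<close> of the normals \<open>\<plusminus>(d \<times> v)\<close> of v in the plane.\<close>

locale polygon_sweep =
  fixes K :: "vec3 set" and d v k\<^sub>1 k\<^sub>2 :: vec3
  assumes polytope: "polytope K"
    and in_plane: "K \<subseteq> {x. x \<bullet> d = 0}"
    and d_nonzero: "d \<noteq> 0" and v_nonzero: "v \<noteq> 0" and v_in_plane: "v \<bullet> d = 0"
    and max_normal: "strict_maximizer K (d \<times> v) k\<^sub>1"
    and min_normal: "strict_maximizer K (- (d \<times> v)) k\<^sub>2"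
    and distinct: "k\<^sub>1 \<noteq> k\<^sub>2"
begin

definition kept :: "vec3 set" where
  "kept = {k. \<exists>\<psi>. \<psi> \<bullet> d = 0 \<and> \<psi> \<bullet> v < 0 \<and> strict_maximizer K \<psi> k}"

definition shifted :: "vec3 set" where
  "shifted = {k. \<exists>\<psi>. \<psi> \<bullet> d = 0 \<and> \<psi> \<bullet> v > 0 \<and> strict_maximizer K \<psi> k}"

lemma maximizer_of_normal:
  assumes "\<psi> \<bullet> d = 0" "\<psi> \<bullet> v = 0" "strict_maximizer K \<psi> k"
  shows "k = k\<^sub>1 \<or> k = k\<^sub>2"
proof -
  obtain c where c: "\<psi> = c *\<^sub>R (d \<times> v)"
    by (rule orthogonal_both_imp_multiple_cross[OF assms(1,2)
          cross_orthogonal_nonzero[OF d_nonzero v_nonzero v_in_plane]])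
  consider "c > 0" | "c < 0" | "c = 0" by linarith
  then show ?thesis
  proof cases
    case 1
    then have "strict_maximizer K (d \<times> v) k"
      using strict_maximizer_scaleR[OF assms(3), of "1 / c"] c by simp
    then show ?thesis using strict_maximizer_unique max_normal by blast
  next
    case 2
    then have "strict_maximizer K (- (d \<times> v)) k"
      using strict_maximizer_scaleR[OF assms(3), of "- 1 / c"] c by simp
    then show ?thesis using strict_maximizer_unique min_normal by blast
  next
    case 3
    then have "strict_maximizer K (- 0) k" using assms(3) c by simp
    then have "K = {k}" using strict_maximizer_uminus_imp_singleton by fastforce
    moreover have "k\<^sub>1 \<in> K" "k\<^sub>2 \<in> K" using max_normal min_normal strict_maximizer_def by auto
    ultimately show ?thesis using distinct by blast
  qed
qed

text \<open>Tilting a normal of v slightly towards \<open>\<plusminus>v\<close> keeps its strict maximizer.\<close>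

lemma maximizer_of_normal_kept_shifted:
  assumes "\<psi> \<bullet> d = 0" "\<psi> \<bullet> v = 0" "strict_maximizer K \<psi> k"
  shows "k \<in> kept \<inter> shifted"
proof -
  note E = polytope_extreme_points[OF polytope]
  obtain \<epsilon> where "\<epsilon> > 0" and \<epsilon>: "\<And>s. \<bar>s\<bar> \<le> \<epsilon> \<Longrightarrow> strict_maximizer K (\<psi> + s *\<^sub>R v) k"
    using strict_maximizer_perturb[OF E(1), of \<psi> k v] assms(3) unfolding E(2)[symmetric] by blast
  have tilt: "(\<psi> + s *\<^sub>R v) \<bullet> d = 0" "(\<psi> + s *\<^sub>R v) \<bullet> v = s * (v \<bullet> v)" for s
    using assms(1,2) v_in_plane by (simp_all add: inner_add_left)
  have "v \<bullet> v > 0" using v_nonzero by simp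
  have "k \<in> kept" unfolding kept_def
    using tilt[of "- \<epsilon>"] \<epsilon>[of "- \<epsilon>"] \<open>\<epsilon> > 0\<close> \<open>v \<bullet> v > 0\<close>
    by (intro CollectI exI[of _ "\<psi> + (- \<epsilon>) *\<^sub>R v"]) (simp add: mult_neg_pos)
  moreover have "k \<in> shifted" unfolding shifted_def
    using tilt[of \<epsilon>] \<epsilon>[of \<epsilon>] \<open>\<epsilon> > 0\<close> \<open>v \<bullet> v > 0\<close>
    by (intro CollectI exI[of _ "\<psi> + \<epsilon> *\<^sub>R v"]) simp
  ultimately show ?thesis by blast
qed

lemma kept_Int_shifted: "kept \<inter> shifted = {k\<^sub>1, k\<^sub>2}"
proof
  show "kept \<inter> shifted \<subseteq> {k\<^sub>1, k\<^sub>2}"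
  proof
    fix k assume "k \<in> kept \<inter> shifted"
    then obtain \<psi> \<psi>' where \<psi>: "\<psi> \<bullet> d = 0" "\<psi> \<bullet> v < 0" "strict_maximizer K \<psi> k"
      and \<psi>': "\<psi>' \<bullet> d = 0" "\<psi>' \<bullet> v > 0" "strict_maximizer K \<psi>' k"
      unfolding kept_def shifted_def by blast
    \<comment> \<open>a positive combination of \<open>\<psi>\<close> and \<open>\<psi>'\<close> orthogonal to v\<close>
    define \<omega> where "\<omega> = (\<psi>' \<bullet> v) *\<^sub>R \<psi> + (- (\<psi> \<bullet> v)) *\<^sub>R \<psi>'"
    have "\<omega> \<bullet> d = 0" "\<omega> \<bullet> v = 0"
      unfolding \<omega>_def using \<psi> \<psi>' by (simp_all add: inner_add_left inner_diff_left)
    moreover have "strict_maximizer K \<omega> k"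
      unfolding strict_maximizer_def
    proof (intro conjI ballI impI)
      fix y assume "y \<in> K" "y \<noteq> k"
      then have "\<psi> \<bullet> y < \<psi> \<bullet> k" "\<psi>' \<bullet> y < \<psi>' \<bullet> k"
        using \<psi>(3) \<psi>'(3) unfolding strict_maximizer_def by auto
      then have "(\<psi>' \<bullet> v) * (\<psi> \<bullet> y) + (- (\<psi> \<bullet> v)) * (\<psi>' \<bullet> y)
          < (\<psi>' \<bullet> v) * (\<psi> \<bullet> k) + (- (\<psi> \<bullet> v)) * (\<psi>' \<bullet> k)"
        using \<psi>(2) \<psi>'(2) by (intro add_strict_mono mult_strict_left_mono) auto
      then show "\<omega> \<bullet> y < \<omega> \<bullet> k" unfolding \<omega>_def by (simp add: inner_add_left inner_diff_left)
    qed (use \<psi>(3) strict_maximizer_def in blast)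
    ultimately show "k \<in> {k\<^sub>1, k\<^sub>2}" using maximizer_of_normal by blast
  qed
  have "(d \<times> v) \<bullet> d = 0" "(d \<times> v) \<bullet> v = 0" "(- (d \<times> v)) \<bullet> d = 0" "(- (d \<times> v)) \<bullet> v = 0"
    by (simp_all add: dot_cross_self)
  then show "{k\<^sub>1, k\<^sub>2} \<subseteq> kept \<inter> shifted"
    using maximizer_of_normal_kept_shifted max_normal min_normal by blast
qed

lemma kept_Un_shifted: "kept \<union> shifted = {x. x extreme_point_of K}"
proof
  show "kept \<union> shifted \<subseteq> {x. x extreme_point_of K}"
    unfolding kept_def shifted_def using strict_maximizer_imp_extreme_point by blast
  show "{x. x extreme_point_of K} \<subseteq> kept \<union> shifted"
  proof
    fix k assume "k \<in> {x. x extreme_point_of K}"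
    then obtain \<psi> where "strict_maximizer K \<psi> k"
      using extreme_point_imp_strict_maximizer[OF polytope] by blast
    then have \<psi>: "strict_maximizer K (proj_plane d \<psi>) k" "proj_plane d \<psi> \<bullet> d = 0"
      using strict_maximizer_proj_plane[OF in_plane] proj_plane_orthogonal[OF d_nonzero] by auto
    consider "proj_plane d \<psi> \<bullet> v < 0" | "proj_plane d \<psi> \<bullet> v > 0" | "proj_plane d \<psi> \<bullet> v = 0"
      by linarith
    then show "k \<in> kept \<union> shifted"
    proof cases
      case 1
      then show ?thesis unfolding kept_def using \<psi> by blast
    next
      case 2
      then show ?thesis unfolding shifted_def using \<psi> by blast
    next
      case 3
      then show ?thesis using maximizer_of_normal_kept_shifted[OF \<psi>(2) 3 \<psi>(1)] by blast
    qed
  qed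
qed

lemma extreme_points_sweep: "{x. x extreme_point_of sweep K v} = kept \<union> (\<lambda>k. k + v) ` shifted"
proof
  have "kept \<subseteq> {x. x extreme_point_of sweep K v}"
    unfolding kept_def using strict_maximizer_sweep_neg strict_maximizer_imp_extreme_point by blast
  moreover have "(\<lambda>k. k + v) ` shifted \<subseteq> {x. x extreme_point_of sweep K v}"
    unfolding shifted_def using strict_maximizer_sweep_pos strict_maximizer_imp_extreme_point by blast
  ultimately show "kept \<union> (\<lambda>k. k + v) ` shifted \<subseteq> {x. x extreme_point_of sweep K v}" by blast
  show "{x. x extreme_point_of sweep K v} \<subseteq> kept \<union> (\<lambda>k. k + v) ` shifted"
  proof
    fix x assume "x \<in> {x. x extreme_point_of sweep K v}"
    then obtain \<psi> where "strict_maximizer (sweep K v) \<psi> x"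
      using extreme_point_imp_strict_maximizer[OF polytope_sweep[OF polytope]] by blast
    then have \<psi>: "strict_maximizer (sweep K v) (proj_plane d \<psi>) x" "proj_plane d \<psi> \<bullet> d = 0"
      using strict_maximizer_proj_plane sweep_subset_hyperplane[OF in_plane v_in_plane]
        proj_plane_orthogonal[OF d_nonzero] by auto
    show "x \<in> kept \<union> (\<lambda>k. k + v) ` shifted"
    proof (rule strict_maximizer_of_sweep[OF \<psi>(1) v_nonzero])
      assume "proj_plane d \<psi> \<bullet> v > 0" "strict_maximizer K (proj_plane d \<psi>) (x - v)"
      then have "x - v \<in> shifted" unfolding shifted_def using \<psi>(2) by blast
      then show ?thesis by (auto intro!: image_eqI[of _ _ "x - v"])
    next
      assume "proj_plane d \<psi> \<bullet> v < 0" "strict_maximizer K (proj_plane d \<psi>) x"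
      then show ?thesis unfolding kept_def using \<psi>(2) by blast
    qed
  qed
qed

lemma kept_disjoint_shifted: "kept \<inter> (\<lambda>k. k + v) ` shifted = {}"
proof -
  have "k + v \<notin> K" if "k \<in> shifted" for k
  proof
    assume "k + v \<in> K"
    obtain \<psi> where "\<psi> \<bullet> v > 0" "strict_maximizer K \<psi> k" using \<open>k \<in> shifted\<close> shifted_def by blast
    with \<open>k + v \<in> K\<close> v_nonzero show False
      unfolding strict_maximizer_def by (auto simp: inner_add_right)
  qed
  moreover have "kept \<subseteq> K" unfolding kept_def strict_maximizer_def by blast
  ultimately show ?thesis by blast
qed

lemma card_extreme_points_sweep:
  "card {x. x extreme_point_of sweep K v} = card {x. x extreme_point_of K} + 2"
proof -
  have fin: "finite kept" "finite shifted"
    using polytope_extreme_points(1)[OF polytope] kept_Un_shifted by (metis finite_Un)+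
  have "card {x. x extreme_point_of sweep K v} = card kept + card ((\<lambda>k. k + v) ` shifted)"
    unfolding extreme_points_sweep
    using kept_disjoint_shifted fin by (simp add: card_Un_disjoint)
  also have "\<dots> = card kept + card shifted" by (simp add: card_image)
  also have "\<dots> = card (kept \<union> shifted) + card (kept \<inter> shifted)" by (rule card_Un_Int[OF fin])
  finally show ?thesis unfolding kept_Un_shifted kept_Int_shifted using distinct by simp
qed

end

lemma card_extreme_points_sweep:
  fixes K :: "vec3 set" and d v :: vec3
  assumes "polytope K" "K \<subseteq> {x. x \<bullet> d = 0}" "d \<noteq> 0" "v \<noteq> 0" "v \<bullet> d = 0"
    and "2 \<le> card {x. x extreme_point_of K}"
    and "\<And>\<psi>. \<psi> \<bullet> d = 0 \<Longrightarrow> \<psi> \<bullet> v = 0 \<Longrightarrow> \<psi> \<noteq> 0 \<Longrightarrow> \<exists>k. strict_maximizer K \<psi> k"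
  shows "card {x. x extreme_point_of sweep K v} = card {x. x extreme_point_of K} + 2"
proof -
  have "(d \<times> v) \<bullet> d = 0" "(d \<times> v) \<bullet> v = 0" by (simp_all add: dot_cross_self)
  moreover have "d \<times> v \<noteq> 0" using cross_orthogonal_nonzero assms(3-5) by blast
  ultimately obtain k\<^sub>1 k\<^sub>2 where k: "strict_maximizer K (d \<times> v) k\<^sub>1" "strict_maximizer K (- (d \<times> v)) k\<^sub>2"
    using assms(7)[of "d \<times> v"] assms(7)[of "- (d \<times> v)"] by auto
  have "k\<^sub>1 \<noteq> k\<^sub>2"
  proof
    assume "k\<^sub>1 = k\<^sub>2"
    then have "K = {k\<^sub>1}" using k strict_maximizer_uminus_imp_singleton by simp
    then have "{x. x extreme_point_of K} \<subseteq> {k\<^sub>1}" by (auto simp: extreme_point_of_def)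
    then have "card {x. x extreme_point_of K} \<le> 1" using card_mono[of "{k\<^sub>1}"] by simp
    then show False using assms(6) by simp
  qed
  with assms k interpret polygon_sweep K d v k\<^sub>1 k\<^sub>2 by unfold_locales
  show ?thesis by (rule card_extreme_points_sweep)
qed

lemma card_extreme_points_sweep_family:
  fixes T :: "vec3 set" and u :: "'b \<Rightarrow> vec3"
  assumes "finite S" "polytope T" "T \<subseteq> {x. x \<bullet> d = 0}" "d \<noteq> 0"
    and "2 \<le> card {x. x extreme_point_of T}"
    and in_plane: "\<forall>g\<in>S. u g \<bullet> d = 0 \<and> u g \<noteq> 0"
    and pairwise: "\<forall>g\<in>S. \<forall>h\<in>S. g \<noteq> h \<longrightarrow> \<not> collinear {0, u g, u h}"
    and max_T: "\<And>g \<psi>. g \<in> S \<Longrightarrow> \<psi> \<bullet> d = 0 \<Longrightarrow> \<psi> \<bullet> u g = 0 \<Longrightarrow> \<psi> \<noteq> 0 \<Longrightarrow>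
                  \<exists>k. strict_maximizer T \<psi> k"
  shows "card {x. x extreme_point_of sweep_family T u S} = card {x. x extreme_point_of T} + 2 * card S"
  using assms(1) in_plane pairwise max_T
proof (induction S)
  case empty
  then show ?case by simp
next
  case (insert g S)
  let ?K = "sweep_family T u S"
  have "polytope ?K" using polytope_sweep_family[OF insert.hyps(1) assms(2)] .
  moreover have "?K \<subseteq> {x. x \<bullet> d = 0}"
    by (intro sweep_family_subset_hyperplane[OF assms(3)]) (use insert.prems(1) in auto)
  moreover have "card {x. x extreme_point_of ?K} = card {x. x extreme_point_of T} + 2 * card S"
    by (rule insert.IH) (use insert.prems in auto)
  moreover have "\<exists>k. strict_maximizer ?K \<psi> k"
    if "\<psi> \<bullet> d = 0" "\<psi> \<bullet> u g = 0" "\<psi> \<noteq> 0" for \<psi>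
  proof (rule strict_maximizer_sweep_family)
    show "\<forall>h\<in>S. \<psi> \<bullet> u h \<noteq> 0"
      using orthogonal_pair_collinear[OF that(3) assms(4) that(1), of "u g"] insert that
      by (metis inner_commute insertCI)
    show "strict_maximizer T \<psi> (SOME k. strict_maximizer T \<psi> k)"
      using insert.prems(3) that by (metis insertI1 someI_ex)
  qed (use insert in auto)
  ultimately show ?case
    using card_extreme_points_sweep[of ?K d "u g"] insert assms(4,5)
    by (simp add: sweep_family_insert)
qed

lemma card_extreme_points_triangle_sweep:
  fixes A B C d :: vec3 and u :: "'b \<Rightarrow> vec3"
  assumes "finite S" "d \<noteq> 0" "A \<bullet> d = 0" "B \<bullet> d = 0" "C \<bullet> d = 0" "\<forall>g\<in>S. u g \<bullet> d = 0"
    and "\<not> collinear {A, B, C}"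
    and pairwise: "\<forall>g\<in>S. \<forall>h\<in>S. g \<noteq> h \<longrightarrow> \<not> collinear {0, u g, u h}"
    and edges: "\<forall>g\<in>S. \<forall>e\<in>{B - A, C - A, C - B}. \<not> collinear {0, e, u g}"
  shows "card {x. x extreme_point_of sweep_family (convex hull {A, B, C}) u S} = 2 * card S + 3"
proof -
  have indep: "\<not> affine_dependent {A, B, C}" and "A \<noteq> B" "A \<noteq> C" "B \<noteq> C"
    using assms(7) collinear_3_eq_affine_dependent[of A B C] by auto
  have "{x. x extreme_point_of convex hull {A, B, C}} = {A, B, C}"
    by (auto simp: extreme_point_of_convex_hull_affine_independent[OF indep])
  then have card_T: "card {x. x extreme_point_of convex hull {A, B, C}} = 3"
    using \<open>A \<noteq> B\<close> \<open>A \<noteq> C\<close> \<open>B \<noteq> C\<close> by simp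
  have T_in_plane: "convex hull {A, B, C} \<subseteq> {x. x \<bullet> d = 0}"
    using assms(3-5) by (intro hull_minimal) (auto simp: subspace_imp_convex subspace_hyperplane2)
  have "\<exists>k. strict_maximizer (convex hull {A, B, C}) \<psi> k"
    if "g \<in> S" "\<psi> \<bullet> d = 0" "\<psi> \<bullet> u g = 0" "\<psi> \<noteq> 0" for g \<psi>
  proof (rule strict_maximizer_convex_hull_3)
    have "\<psi> \<bullet> e \<noteq> 0" if "e \<in> {B - A, C - A, C - B}" for e
    proof
      assume "\<psi> \<bullet> e = 0"
      moreover have "e \<bullet> d = 0" using that assms(3-5) by (auto simp: inner_diff_left)
      ultimately have "collinear {0, e, u g}"
        using orthogonal_pair_collinear[OF \<open>\<psi> \<noteq> 0\<close> assms(2) \<open>\<psi> \<bullet> d = 0\<close>, of e "u g"]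
          \<open>g \<in> S\<close> \<open>\<psi> \<bullet> u g = 0\<close> assms(6) by (simp add: inner_commute)
      then show False using edges \<open>g \<in> S\<close> that by blast
    qed
    from this[of "B - A"] this[of "C - A"] this[of "C - B"]
    show "\<psi> \<bullet> A \<noteq> \<psi> \<bullet> B" "\<psi> \<bullet> A \<noteq> \<psi> \<bullet> C" "\<psi> \<bullet> B \<noteq> \<psi> \<bullet> C"
      by (auto simp: inner_diff_right)
  qed
  moreover have "\<forall>g\<in>S. u g \<noteq> 0" using edges by (auto simp: insert_commute collinear_2)
  ultimately show ?thesis
    using card_extreme_points_sweep_family[OF assms(1) _ T_in_plane assms(2)] card_T assms(6) pairwise
    by (simp add: polytope_convex_hull)
qed

section \<open>Facets of a swept triangle\<close>

text \<open>If a supporting plane of the full-dimensional P contains two independent directions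
  w1, w2 at a point, it cuts out a facet parallel to them; so a direction d not parallel to any
  facet avoids their span.\<close>

lemma not_in_span_face_directions:
  fixes P :: "vec3 set"
  assumes "convex P" "aff_dim P = 3" "m \<noteq> 0"
    and "x \<in> P" "x + w1 \<in> P" "x + w2 \<in> P" "\<And>y. y \<in> P \<Longrightarrow> m \<bullet> y \<le> m \<bullet> x"
    and "m \<bullet> w1 = 0" "m \<bullet> w2 = 0" "\<not> collinear {0, w1, w2}"
    and no_facet: "\<And>F. F facet_of P \<Longrightarrow> \<not> plane_orth_facet d F"
  shows "d \<notin> span {w1, w2}"
proof
  assume d: "d \<in> span {w1, w2}"
  define F where "F = P \<inter> {y. m \<bullet> y = m \<bullet> x}"
  have face: "F face_of P"
    unfolding F_def by (rule face_of_Int_supporting_hyperplane_le) (use assms in auto)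
  have sub: "{x, x + w1, x + w2} \<subseteq> F" unfolding F_def using assms(4-6,8,9) by (auto simp: inner_add_right)
  have "aff_dim F \<le> aff_dim {y. m \<bullet> y = m \<bullet> x}" unfolding F_def by (rule aff_dim_subset) blast
  then have le2: "aff_dim F \<le> 2" using aff_dim_hyperplane[OF assms(3)] by simp
  have "{x, x + w1, x + w2} = (+) x ` {0, w1, w2}" by auto
  then have "aff_dim {x, x + w1, x + w2} = aff_dim {0, w1, w2}" by (metis aff_dim_translation_eq)
  then have "aff_dim F \<ge> 2"
    using assms(10) collinear_aff_dim[of "{0, w1, w2}"] aff_dim_subset[OF sub] by linarith
  with le2 have "F facet_of P" unfolding facet_of_def using face assms(2) sub by auto
  moreover have "w1 \<in> {a - b | a b. a \<in> F \<and> b \<in> F}" "w2 \<in> {a - b | a b. a \<in> F \<and> b \<in> F}"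
    using sub by (intro CollectI exI[of _ "x + w1"] exI[of _ "x + w2"] exI[of _ x]; simp)+
  then have "span {w1, w2} \<subseteq> span {a - b | a b. a \<in> F \<and> b \<in> F}" by (intro span_mono) auto
  then have "plane_orth_facet d F" unfolding plane_orth_facet_def using d by blast
  ultimately show False using no_facet by blast
qed

context
  fixes p q r d :: vec3 and G :: "vec3 set"
  assumes finite_G: "finite G"
    and full_dim: "aff_dim (sweep_family (convex hull {p, q, r}) (\<lambda>g. g) G) = 3"
    and no_facet: "\<And>F. F facet_of sweep_family (convex hull {p, q, r}) (\<lambda>g. g) G \<Longrightarrow>
                     \<not> plane_orth_facet d F"
begin

text \<open>The edge vectors available at the top vertex: generators orthogonal to m and differences
  of points of the triangle.\<close>

lemma not_in_span_edge_vectors: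
  assumes "\<tau> \<in> convex hull {p, q, r}" "\<forall>\<tau>'\<in>convex hull {p, q, r}. m \<bullet> \<tau>' \<le> m \<bullet> \<tau>" "m \<noteq> 0"
    and "m \<bullet> w1 = 0" "m \<bullet> w2 = 0" "\<not> collinear {0, w1, w2}"
    and "w1 \<in> G \<union> (\<lambda>\<tau>'. \<tau>' - \<tau>) ` (convex hull {p, q, r})"
    and "w2 \<in> G \<union> (\<lambda>\<tau>'. \<tau>' - \<tau>) ` (convex hull {p, q, r})"
  shows "d \<notin> span {w1, w2}"
proof -
  let ?T = "convex hull {p, q, r}" and ?x = "top_vertex m (\<lambda>g. g) G \<tau>"
  have on_face: "?x + w \<in> sweep_family ?T (\<lambda>g. g) G"
    if "w \<in> G \<union> (\<lambda>\<tau>'. \<tau>' - \<tau>) ` ?T" "m \<bullet> w = 0" for w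
    using that top_vertex_add_orthogonal[OF finite_G assms(1)] top_vertex_mem[of _ ?T m "\<lambda>g. g" G]
    by (auto simp: top_vertex_translate)
  show ?thesis
  proof (rule not_in_span_face_directions[OF _ full_dim assms(3) _ on_face on_face _ assms(4-6) no_facet])
    show "convex (sweep_family ?T (\<lambda>g. g) G)"
      by (simp add: finite_G polytope_convex_hull polytope_imp_convex polytope_sweep_family)
  qed (use assms top_vertex_mem top_vertex_max in auto)
qed

lemma not_in_span_generators:
  assumes "g \<in> G" "h \<in> G" "\<not> collinear {0, g, h}"
  shows "d \<notin> span {g, h}"
proof -
  have "compact (convex hull {p, q, r})" by (simp add: finite_imp_compact_convex_hull)
  moreover have "continuous_on (convex hull {p, q, r}) (\<lambda>\<tau>. (g \<times> h) \<bullet> \<tau>)"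
    by (intro continuous_intros)
  ultimately obtain \<tau> where "\<tau> \<in> convex hull {p, q, r}"
    "\<forall>\<tau>'\<in>convex hull {p, q, r}. (g \<times> h) \<bullet> \<tau>' \<le> (g \<times> h) \<bullet> \<tau>"
    using continuous_attains_sup[of "convex hull {p, q, r}" "\<lambda>\<tau>. (g \<times> h) \<bullet> \<tau>"] by auto
  moreover have "g \<times> h \<noteq> 0" using assms(3) by (simp add: cross_eq_0)
  ultimately show ?thesis
    by (rule not_in_span_edge_vectors) (use assms in \<open>auto simp: dot_cross_self inner_commute\<close>)
qed

lemma not_in_span_edge_generator:
  assumes "{a, b, c} = {p, q, r}" "g \<in> G" "\<not> collinear {0, b - a, g}"
  shows "d \<notin> span {b - a, g}"
proof -
  define m where "m = (if ((b - a) \<times> g) \<bullet> (c - a) \<le> 0 then (b - a) \<times> g else - ((b - a) \<times> g))"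
  have m: "m \<bullet> (b - a) = 0" "m \<bullet> g = 0" "m \<bullet> (c - a) \<le> 0"
    unfolding m_def by (auto simp: dot_cross_self inner_commute)
  then have "convex hull {p, q, r} \<subseteq> {x. m \<bullet> x \<le> m \<bullet> a}"
    unfolding assms(1)[symmetric] by (intro hull_minimal) (auto simp: convex_halfspace_le inner_diff_right)
  moreover have "m \<noteq> 0" using assms(3) unfolding m_def by (simp add: cross_eq_0)
  moreover have "a \<in> convex hull {p, q, r}" "b \<in> convex hull {p, q, r}"
    unfolding assms(1)[symmetric] by (simp_all add: hull_inc)
  ultimately show ?thesis
    by (intro not_in_span_edge_vectors[of a m]) (use assms m in auto)
qed

lemma not_in_span_triangle:
  assumes "\<not> collinear {0, q - p, r - p}"
  shows "d \<notin> span {q - p, r - p}"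
proof -
  define m where "m = (q - p) \<times> (r - p)"
  have "m \<bullet> (q - p) = 0" "m \<bullet> (r - p) = 0" unfolding m_def by (simp_all add: dot_cross_self inner_commute)
  then have "convex hull {p, q, r} \<subseteq> {x. m \<bullet> x \<le> m \<bullet> p}"
    by (intro hull_minimal) (auto simp: convex_halfspace_le inner_diff_right)
  moreover have "m \<noteq> 0" using assms unfolding m_def by (simp add: cross_eq_0)
  ultimately show ?thesis
    by (intro not_in_span_edge_vectors[of p m])
      (use assms \<open>m \<bullet> (q - p) = 0\<close> \<open>m \<bullet> (r - p) = 0\<close> in \<open>auto simp: hull_inc\<close>)
qed

end

lemma projected_triangle_sweep:
  fixes p q r d :: vec3 and G :: "vec3 set"
  defines "P \<equiv> sweep_family (convex hull {p, q, r}) (\<lambda>g. g) G"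
  assumes "finite G" "d \<noteq> 0"
    and "\<not> collinear {0, q - p, r - p}" "d \<notin> span {q - p, r - p}"
    and pairwise: "\<forall>g\<in>G. \<forall>h\<in>G. g \<noteq> h \<longrightarrow> \<not> collinear {0, g, h} \<and> d \<notin> span {g, h}"
    and edges: "\<forall>g\<in>G. \<forall>e\<in>{q - p, r - p, r - q}. \<not> collinear {0, e, g} \<and> d \<notin> span {e, g}"
  shows "polytope (proj_plane d ` P) \<and> aff_dim (proj_plane d ` P) = 2 \<and>
    card {x. x extreme_point_of proj_plane d ` P} = 2 * card G + 3"
proof -
  let ?L = "proj_plane d"
  have L_diff: "?L x - ?L y = ?L (x - y)" for x y by (simp add: linear_diff[OF linear_proj_plane])
  have in_plane: "?L x \<bullet> d = 0" for x by (rule proj_plane_orthogonal[OF assms(3)])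
  have LP: "?L ` P = sweep_family (convex hull {?L p, ?L q, ?L r}) ?L G"
    unfolding P_def sweep_family_linear_image[OF linear_proj_plane]
    by (simp add: convex_hull_linear_image[OF linear_proj_plane])
  have "\<not> collinear {0, ?L (q - p), ?L (r - p)}" using proj_plane_noncollinear assms(4,5) by blast
  then have triangle: "\<not> collinear {?L p, ?L q, ?L r}"
    using collinear_3[of "?L q" "?L p" "?L r"] by (simp add: L_diff insert_commute)
  have "card {x. x extreme_point_of ?L ` P} = 2 * card G + 3"
    unfolding LP
  proof (rule card_extreme_points_triangle_sweep[OF assms(2,3) in_plane in_plane in_plane _ triangle])
    show "\<forall>g\<in>G. \<forall>h\<in>G. g \<noteq> h \<longrightarrow> \<not> collinear {0, ?L g, ?L h}"
      using pairwise proj_plane_noncollinear by blast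
    show "\<forall>g\<in>G. \<forall>e\<in>{?L q - ?L p, ?L r - ?L p, ?L r - ?L q}. \<not> collinear {0, e, ?L g}"
      using edges proj_plane_noncollinear by (auto simp: L_diff)
  qed (use in_plane in blast)
  moreover have "polytope (?L ` P)"
    unfolding LP by (simp add: assms(2) polytope_convex_hull polytope_sweep_family)
  moreover have "aff_dim (?L ` P) = 2"
  proof -
    have "aff_dim (?L ` P) \<le> aff_dim {x. d \<bullet> x = 0}"
      using in_plane by (intro aff_dim_subset) (auto simp: inner_commute)
    then have "aff_dim (?L ` P) \<le> 2" using assms(3) by simp
    have "{?L p, ?L q, ?L r} \<subseteq> convex hull {?L p, ?L q, ?L r}" by (rule hull_subset)
    also have "\<dots> \<subseteq> ?L ` P" unfolding LP by (rule subset_sweep_family)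
    finally have "aff_dim {?L p, ?L q, ?L r} \<le> aff_dim (?L ` P)" by (rule aff_dim_subset)
    moreover have "\<not> aff_dim {?L p, ?L q, ?L r} \<le> 1" using triangle collinear_aff_dim by blast
    ultimately show ?thesis using \<open>aff_dim (?L ` P) \<le> 2\<close> by linarith
  qed
  ultimately show ?thesis by blast
qed

lemma equiprojective_triangle_sweep:
  fixes p q r :: vec3 and G :: "vec3 set"
  assumes "finite G" "\<not> collinear {p, q, r}"
    and pairwise: "\<forall>g\<in>G. \<forall>h\<in>G. g \<noteq> h \<longrightarrow> \<not> collinear {0, g, h}"
    and edges: "\<forall>g\<in>G. \<forall>e\<in>{q - p, r - p, r - q}. \<not> collinear {0, e, g}"
    and full_dim: "aff_dim (sweep_family (convex hull {p, q, r}) (\<lambda>g. g) G) = 3"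
  shows "equiprojective (2 * card G + 3) (sweep_family (convex hull {p, q, r}) (\<lambda>g. g) G)"
    (is "equiprojective _ ?P")
proof -
  have triangle: "\<not> collinear {0, q - p, r - p}"
    using assms(2) collinear_3[of q p r] by (simp add: insert_commute)
  have "polytope (proj_plane d ` ?P) \<and> aff_dim (proj_plane d ` ?P) = 2 \<and>
      card {x. x extreme_point_of proj_plane d ` ?P} = 2 * card G + 3"
    if "d \<noteq> 0" and "\<And>F. F facet_of ?P \<Longrightarrow> \<not> plane_orth_facet d F" for d
  proof (rule projected_triangle_sweep[OF assms(1) that(1) triangle])
    note facts = assms(1) full_dim that(2)
    show "d \<notin> span {q - p, r - p}" by (rule not_in_span_triangle[OF facts triangle])
    show "\<forall>g\<in>G. \<forall>h\<in>G. g \<noteq> h \<longrightarrow> \<not> collinear {0, g, h} \<and> d \<notin> span {g, h}"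
      using not_in_span_generators[OF facts] pairwise by blast
    have "{p, q, r} = {p, q, r}" "{p, r, q} = {p, q, r}" "{q, r, p} = {p, q, r}" by auto
    then show "\<forall>g\<in>G. \<forall>e\<in>{q - p, r - p, r - q}. \<not> collinear {0, e, g} \<and> d \<notin> span {e, g}"
      using not_in_span_edge_generator[OF facts] edges by blast
  qed
  moreover have "polytope ?P" by (simp add: assms(1) polytope_convex_hull polytope_sweep_family)
  ultimately show ?thesis unfolding equiprojective_def Let_def using full_dim by blast
qed

lemma first_nonzero_pos_scaleR: "c > 0 \<Longrightarrow> first_nonzero_pos (c *\<^sub>R u) \<longleftrightarrow> first_nonzero_pos u"
  unfolding first_nonzero_pos_def by (simp add: zero_less_mult_iff)

lemma first_nonzero_pos_or_uminus:
  assumes "u \<noteq> 0"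
  shows "first_nonzero_pos u \<or> first_nonzero_pos (- u)"
proof -
  have "u $ 1 \<noteq> 0 \<or> u $ 2 \<noteq> 0 \<or> u $ 3 \<noteq> 0" using assms by (auto simp: vec_eq_iff forall_3)
  then show ?thesis unfolding first_nonzero_pos_def by auto
qed

lemma edge_direction_of_edge:
  assumes "e edge_of P" "a extreme_point_of P" "b extreme_point_of P" "a \<in> e" "b \<in> e" "a \<noteq> b"
  obtains w c where "w \<in> edge_dirs P" "c \<noteq> 0" "b - a = c *\<^sub>R w"
proof -
  obtain s :: real where s: "s = 1 \<or> s = - 1" "first_nonzero_pos (s *\<^sub>R (b - a))"
    using first_nonzero_pos_or_uminus[of "b - a"] assms(6) by force
  define w where "w = (s / norm (b - a)) *\<^sub>R (b - a)"
  have "norm (b - a) > 0" using assms(6) by simp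
  then have "b - a = (s * norm (b - a)) *\<^sub>R w" "norm w = 1" "first_nonzero_pos w"
    using s first_nonzero_pos_scaleR[of "1 / norm (b - a)" "s *\<^sub>R (b - a)"]
    unfolding w_def by (auto simp: abs_if)
  moreover have "s * norm (b - a) \<noteq> 0" using s \<open>norm (b - a) > 0\<close> by auto
  moreover have "\<exists>e a b c. e edge_of P \<and> a extreme_point_of P \<and> b extreme_point_of P \<and>
      a \<in> e \<and> b \<in> e \<and> a \<noteq> b \<and> b - a = c *\<^sub>R w"
    using assms \<open>b - a = (s * norm (b - a)) *\<^sub>R w\<close> by blast
  ultimately show thesis
    using that[of w "s * norm (b - a)"] unfolding edge_dirs_def edge_direction_def by blast
qed

lemma triangle_edge_direction:
  assumes "\<not> collinear {p, q, r}"
  obtains w c where "w \<in> edge_dirs (convex hull {p, q, r})" "c \<noteq> 0" "q - p = c *\<^sub>R w"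
proof -
  have indep: "\<not> affine_dependent {p, q, r}" and "p \<noteq> q"
    using assms collinear_3_eq_affine_dependent[of p q r] by auto
  have "convex hull {p, q} face_of convex hull {p, q, r}"
    unfolding face_of_convex_hull_affine_independent[OF indep] by (intro exI[of _ "{p, q}"]) auto
  moreover have "aff_dim (convex hull {p, q}) = 1"
    using aff_dim_affine_independent[of "{p, q}"] \<open>p \<noteq> q\<close> by (simp add: aff_dim_convex_hull affine_independent_2)
  ultimately have "convex hull {p, q} edge_of convex hull {p, q, r}" unfolding edge_of_def by simp
  moreover have "p extreme_point_of convex hull {p, q, r}" "q extreme_point_of convex hull {p, q, r}"
    unfolding extreme_point_of_convex_hull_affine_independent[OF indep] by simp_all
  moreover have "p \<in> convex hull {p, q}" "q \<in> convex hull {p, q}" by (simp_all add: hull_inc)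
  ultimately show thesis using edge_direction_of_edge \<open>p \<noteq> q\<close> that by blast
qed

text \<open>The normals of g form a plane; each other generator k is orthogonal to a single line of it,
  since it is not parallel to g, and finitely many lines do not cover the plane.\<close>

lemma exists_orthogonal_avoiding:
  fixes g :: vec3 and K :: "vec3 set"
  assumes "finite K" "g \<noteq> 0" "\<forall>k\<in>K. \<not> collinear {0, g, k}"
  obtains m where "m \<bullet> g = 0" "\<forall>k\<in>K. m \<bullet> k \<noteq> 0"
proof -
  obtain i where "g \<times> axis i 1 \<noteq> 0" using cross_basis_nonzero[OF assms(2)] by blast
  define b1 where "b1 = g \<times> axis i 1"
  define b2 where "b2 = g \<times> b1"
  have b: "b1 \<bullet> g = 0" "b2 \<bullet> g = 0" "b1 \<noteq> 0"
    unfolding b1_def b2_def using \<open>g \<times> axis i 1 \<noteq> 0\<close> by (simp_all add: dot_cross_self inner_commute)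
  have "b1 \<times> b2 = (b1 \<bullet> b1) *\<^sub>R g" unfolding b2_def using b(1) by (simp add: Lagrange inner_commute)
  then have b12: "b1 \<times> b2 \<noteq> 0" using b(3) assms(2) by simp
  have not_both: "b1 \<bullet> k \<noteq> 0 \<or> b2 \<bullet> k \<noteq> 0" if "k \<in> K" for k
  proof (rule ccontr)
    assume "\<not> ?thesis"
    then obtain c where "k = c *\<^sub>R (b1 \<times> b2)"
      using orthogonal_both_imp_multiple_cross[OF _ _ b12, of k] by (metis inner_commute)
    then have "k = (c * (b1 \<bullet> b1)) *\<^sub>R g" using \<open>b1 \<times> b2 = (b1 \<bullet> b1) *\<^sub>R g\<close> by simp
    then show False using assms(3) that by (auto simp: collinear_lemma)
  qed
  obtain s where s: "s \<notin> (\<lambda>k. - (b1 \<bullet> k) / (b2 \<bullet> k)) ` K"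
    using ex_new_if_finite[OF infinite_UNIV_char_0] assms(1) by blast
  have "(b1 + s *\<^sub>R b2) \<bullet> k \<noteq> 0" if "k \<in> K" for k
  proof
    assume "(b1 + s *\<^sub>R b2) \<bullet> k = 0"
    then have eq: "b1 \<bullet> k + s * (b2 \<bullet> k) = 0" by (simp add: inner_add_left)
    show False
    proof (cases "b2 \<bullet> k = 0")
      case True
      then show False using not_both[OF that] eq by simp
    next
      case False
      then have "s = - (b1 \<bullet> k) / (b2 \<bullet> k)" using eq by (simp add: field_simps)
      then show False using s that by auto
    qed
  qed
  moreover have "(b1 + s *\<^sub>R b2) \<bullet> g = 0" using b by (simp add: inner_add_left)
  ultimately show thesis using that by blast
qed

lemma sweep_family_face_segment:
  fixes a :: "'a::real_inner" and u :: "'b \<Rightarrow> 'a"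
  assumes "finite S" "g \<in> S" "m \<bullet> u g = 0" "\<forall>h\<in>S - {g}. m \<bullet> u h \<noteq> 0"
  defines "x \<equiv> top_vertex m u S a"
  shows "sweep_family {a} u S \<inter> {y. m \<bullet> y = m \<bullet> x} = closed_segment x (x + u g)"
proof
  have "convex (sweep_family {a} u S)"
    using polytope_sweep_family[OF assms(1) polytope_sing] polytope_imp_convex by blast
  then have "closed_segment x (x + u g) \<subseteq> sweep_family {a} u S"
    unfolding x_def
    by (intro closed_segment_subset top_vertex_mem[OF singletonI]
          top_vertex_add_orthogonal[where u = u and T = "{a}", OF assms(1) singletonI assms(2,3)])
  moreover have "m \<bullet> y = m \<bullet> x" if "y \<in> closed_segment x (x + u g)" for y
    using that assms(3) by (auto simp: in_segment algebra_simps inner_add_right)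
  ultimately show "closed_segment x (x + u g) \<subseteq> sweep_family {a} u S \<inter> {y. m \<bullet> y = m \<bullet> x}"
    by blast
next
  define t where "t h = (if m \<bullet> u h > 0 then 1 else 0 :: real)" for h
  show "sweep_family {a} u S \<inter> {y. m \<bullet> y = m \<bullet> x} \<subseteq> closed_segment x (x + u g)"
  proof
    fix y assume "y \<in> sweep_family {a} u S \<inter> {y. m \<bullet> y = m \<bullet> x}"
    then obtain c where y: "y = a + (\<Sum>h\<in>S. c h *\<^sub>R u h)" "\<forall>h\<in>S. 0 \<le> c h \<and> c h \<le> 1"
      and my: "m \<bullet> y = m \<bullet> x" unfolding sweep_family_def by blast
    have le: "c h * (m \<bullet> u h) \<le> t h * (m \<bullet> u h)" if "h \<in> S" for h
      using y(2) that unfolding t_def by (auto simp: mult_left_le_one_le mult_nonneg_nonpos)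
    \<comment> \<open>the total is maximal, so every coefficient with \<open>m \<bullet> u h \<noteq> 0\<close> is the maximizing one\<close>
    have "c h = t h" if "h \<in> S - {g}" for h
    proof (rule ccontr)
      assume "c h \<noteq> t h"
      then have "c h * (m \<bullet> u h) < t h * (m \<bullet> u h)"
        using le[of h] assms(4) that by (auto simp: order.strict_iff_order)
      then have "(\<Sum>h\<in>S. c h * (m \<bullet> u h)) < (\<Sum>h\<in>S. t h * (m \<bullet> u h))"
        using le that by (intro sum_strict_mono_ex1[OF assms(1)]) auto
      then show False
        using my unfolding y(1) x_def top_vertex_def t_def
        by (simp add: inner_add_right inner_sum_right)
    qed
    then have "(\<Sum>h\<in>S. c h *\<^sub>R u h) = c g *\<^sub>R u g + (\<Sum>h\<in>S. t h *\<^sub>R u h)"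
      using assms(1-3) by (simp add: sum.remove t_def)
    then have "y = x + c g *\<^sub>R u g"
      unfolding y(1) x_def top_vertex_def t_def by (simp add: algebra_simps)
    then show "y \<in> closed_segment x (x + u g)"
      using y(2) assms(2) by (auto simp: in_segment algebra_simps intro!: exI[of _ "c g"])
  qed
qed

lemma generator_edge_direction:
  assumes "generator_set G" "g \<in> G"
  obtains w c where "w \<in> edge_dirs (sweep_family {a} (\<lambda>g. g) G)" "c \<noteq> 0" "g = c *\<^sub>R w"
proof -
  let ?Z = "sweep_family {a} (\<lambda>g. g) G"
  have "finite G" "g \<noteq> 0" "\<forall>k\<in>G - {g}. \<not> collinear {0, g, k}"
    using assms unfolding generator_set_def by auto
  then obtain m where m: "m \<bullet> g = 0" "\<forall>k\<in>G - {g}. m \<bullet> k \<noteq> 0"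
    using exists_orthogonal_avoiding[of "G - {g}" g] by blast
  define x where "x = top_vertex m (\<lambda>g. g) G a"
  have "convex ?Z" using polytope_imp_convex polytope_sweep_family[OF \<open>finite G\<close> polytope_sing] by blast
  moreover have "\<And>y. y \<in> ?Z \<Longrightarrow> m \<bullet> y \<le> m \<bullet> x"
    unfolding x_def using top_vertex_max[of "{a}" m a] by simp
  ultimately have "?Z \<inter> {y. m \<bullet> y = m \<bullet> x} face_of ?Z" by (rule face_of_Int_supporting_hyperplane_le)
  then have face: "closed_segment x (x + g) face_of ?Z"
    using sweep_family_face_segment[OF \<open>finite G\<close> assms(2), of m "\<lambda>g. g" a] m unfolding x_def by simp
  have "x \<noteq> x + g" using \<open>g \<noteq> 0\<close> by simp
  then have "aff_dim (closed_segment x (x + g)) = 1"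
    using aff_dim_affine_independent[of "{x, x + g}"]
    by (simp add: segment_convex_hull aff_dim_convex_hull affine_independent_2)
  with face have "closed_segment x (x + g) edge_of ?Z" unfolding edge_of_def by simp
  moreover have "x extreme_point_of ?Z" "x + g extreme_point_of ?Z"
    using extreme_point_of_face[OF face] by (auto simp: extreme_point_of_segment)
  ultimately obtain w c where "w \<in> edge_dirs ?Z" "c \<noteq> 0" "x + g - x = c *\<^sub>R w"
    using edge_direction_of_edge \<open>x \<noteq> x + g\<close> by (metis ends_in_segment)
  then show thesis using that by simp
qed

section \<open>Zonotopes plus a generic triangle\<close>

lemma translated_zonotope_eq_sweep_family:
  "(\<lambda>x. a + x) ` zonotope_gen G = sweep_family {a} (\<lambda>g. g) G"
  unfolding zonotope_gen_def sweep_family_def by auto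

lemma minkowski_sum_sweep_family:
  "minkowski_sum (sweep_family {a} u S) t = sweep_family ((\<lambda>x. a + x) ` t) u S"
proof (intro equalityI subsetI)
  fix x assume "x \<in> minkowski_sum (sweep_family {a} u S) t"
  then obtain y c where "x = (a + y) + (\<Sum>g\<in>S. c g *\<^sub>R u g)" "y \<in> t" "\<forall>g\<in>S. 0 \<le> c g \<and> c g \<le> 1"
    unfolding minkowski_sum_def sweep_family_def by (auto simp: algebra_simps)
  then show "x \<in> sweep_family ((\<lambda>x. a + x) ` t) u S"
    using sweep_familyI[of "a + y" "(\<lambda>x. a + x) ` t" S c u] by blast
next
  fix x assume "x \<in> sweep_family ((\<lambda>x. a + x) ` t) u S"
  then obtain y c where "x = (a + (\<Sum>g\<in>S. c g *\<^sub>R u g)) + y" "y \<in> t" "\<forall>g\<in>S. 0 \<le> c g \<and> c g \<le> 1"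
    unfolding sweep_family_def by (auto simp: algebra_simps)
  then show "x \<in> minkowski_sum (sweep_family {a} u S) t"
    unfolding minkowski_sum_def using sweep_familyI[of a "{a}" S c u] by blast
qed

lemma aff_dim_minkowski_sum:
  assumes "aff_dim Z = 3" "y \<in> t"
  shows "aff_dim (minkowski_sum Z t) = 3"
proof -
  have "(\<lambda>x. y + x) ` Z \<subseteq> minkowski_sum Z t"
    unfolding minkowski_sum_def using assms(2) by (auto simp: add.commute)
  then have "aff_dim ((\<lambda>x. y + x) ` Z) \<le> aff_dim (minkowski_sum Z t)" by (rule aff_dim_subset)
  then have "aff_dim Z \<le> aff_dim (minkowski_sum Z t)" by (simp add: aff_dim_translation_eq)
  moreover have "aff_dim (minkowski_sum Z t) \<le> 3" using aff_dim_le_DIM[of "minkowski_sum Z t"] by simp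
  ultimately show ?thesis using assms(1) by linarith
qed

lemma generic_triangle_edge_not_parallel:
  assumes "generic_triangle_for (sweep_family {a} (\<lambda>g. g) G) (convex hull {p, q, r})"
    and "generator_set G" "g \<in> G" "\<not> collinear {p, q, r}" "e \<in> {q - p, r - p, r - q}"
  shows "\<not> collinear {0, e, g}"
proof
  assume "collinear {0, e, g}"
  obtain wg cg where wg: "wg \<in> edge_dirs (sweep_family {a} (\<lambda>g. g) G)" "cg \<noteq> 0" "g = cg *\<^sub>R wg"
    using generator_edge_direction[OF assms(2,3)] by blast
  have hulls: "{p, r, q} = {p, q, r}" "{q, r, p} = {p, q, r}" by auto
  from assms(5) consider "e = q - p" | "e = r - p" | "e = r - q" by blast
  then obtain w c where w: "w \<in> edge_dirs (convex hull {p, q, r})" "c \<noteq> 0" "e = c *\<^sub>R w"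
  proof cases
    case 1
    then show thesis using triangle_edge_direction[OF assms(4)] that by metis
  next
    case 2
    then show thesis using triangle_edge_direction[of p r q, unfolded hulls] assms(4) that by metis
  next
    case 3
    then show thesis using triangle_edge_direction[of q r p, unfolded hulls] assms(4) that by metis
  qed
  have "w \<noteq> 0" using w(1) unfolding edge_dirs_def edge_direction_def by auto
  then obtain l where "g = l *\<^sub>R e"
    using \<open>collinear {0, e, g}\<close> w(2,3) wg(2,3) assms(2,3)
    unfolding generator_set_def by (auto simp: collinear_lemma)
  moreover have "wg = (1 / cg) *\<^sub>R g" using wg(2,3) by simp
  ultimately have "wg = (l * c / cg) *\<^sub>R w" using w(3) by simp
  then have "wg \<in> span (edge_dirs (convex hull {p, q, r}))" by (simp add: span_mul span_base w(1))
  then show False using assms(1) wg(1) unfolding generic_triangle_for_def by blast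
qed

theorem lemma5p1:
  fixes Z t G :: "vec3 set" and n :: nat
  assumes "zonotope_with_gens Z G"
    and "card G = n"
    and "aff_dim Z = 3"
    and "generic_triangle_for Z t"
  shows "equiprojective (2 * n + 3) (minkowski_sum Z t)"
proof -
  obtain a where G: "generator_set G" and Z: "Z = sweep_family {a} (\<lambda>g. g) G"
    using assms(1) unfolding zonotope_with_gens_def translated_zonotope_eq_sweep_family by blast
  obtain p q r where pqr: "\<not> collinear {p, q, r}" and t: "t = convex hull {p, q, r}"
    using assms(4) unfolding generic_triangle_for_def triangle_def by blast
  have P: "minkowski_sum Z t = sweep_family (convex hull {a + p, a + q, a + r}) (\<lambda>g. g) G"
    unfolding Z t minkowski_sum_sweep_family convex_hull_translation[symmetric] by simp
  have "p \<in> t" unfolding t by (simp add: hull_inc)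
  with assms(3) have full_dim: "aff_dim (sweep_family (convex hull {a + p, a + q, a + r}) (\<lambda>g. g) G) = 3"
    unfolding P[symmetric] by (rule aff_dim_minkowski_sum)
  have edges: "\<not> collinear {0, e, g}" if "g \<in> G" "e \<in> {q - p, r - p, r - q}" for e g
    using assms(4) unfolding Z t by (rule generic_triangle_edge_not_parallel[OF _ G that(1) pqr that(2)])
  have "equiprojective (2 * card G + 3) (sweep_family (convex hull {a + p, a + q, a + r}) (\<lambda>g. g) G)"
  proof (rule equiprojective_triangle_sweep[OF _ _ _ _ full_dim])
    show "finite G" "\<forall>g\<in>G. \<forall>h\<in>G. g \<noteq> h \<longrightarrow> \<not> collinear {0, g, h}"
      using G unfolding generator_set_def by auto
    show "\<not> collinear {a + p, a + q, a + r}"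
      using pqr by (simp add: collinear_3[of "a + p"] collinear_3[of p])
    show "\<forall>g\<in>G. \<forall>e\<in>{a + q - (a + p), a + r - (a + p), a + r - (a + q)}. \<not> collinear {0, e, g}"
      using edges by simp
  qed
  then show ?thesis unfolding P assms(2) .
qed

end
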